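(* Every embeddable graph is 4-colourable (in the usual sense of proper vertex colouring).
   Context: Let $\mathbb{H}^2=\{(x,y,z)\in\mathbb{R}^3 : x^2+y^2+z^2=1,\ z>0\}$ be the open northern hemisphere. A vector system is a finite subset of $\mathbb{H}^2$. A finite simple undirected graph $H=(V,E)$ is embeddable if there is an injective map $f:V\to\mathbb{H}^2$ such that $f(u)\cdot f(v)=0$ for every edge $\{u,v\}\in E$ (non-adjacent vertices may or may not be sent to orthogonal vectors, but distinct vertices must go to distinct vectors). *)

theory Defs
  imports "HOL-Analysis.Analysis"
begin

definition hemisphere :: "(real ^ 3) set" where
  "hemisphere = {v. norm v = 1 \<and> v $ 3 > 0}"

definition simple_graph :: "'a set \<Rightarrow> 'a set set \<Rightarrow> bool" where
  "simple_graph V E \<longleftrightarrow> finite V \<and> (\<forall>e\<in>E. e \<subseteq> V \<and> card e = 2)"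

definition embeddable :: "'a set \<Rightarrow> 'a set set \<Rightarrow> bool" where
  "embeddable V E \<longleftrightarrow> (\<exists>f. inj_on f V \<and> f ` V \<subseteq> hemisphere \<and>
      (\<forall>u v. {u, v} \<in> E \<longrightarrow> f u \<bullet> f v = 0))"

definition colourable :: "nat \<Rightarrow> 'a set \<Rightarrow> 'a set set \<Rightarrow> bool" where
  "colourable k V E \<longleftrightarrow> (\<exists>c :: 'a \<Rightarrow> nat. (\<forall>v\<in>V. c v < k) \<and>
      (\<forall>u v. {u, v} \<in> E \<longrightarrow> c u \<noteq> c v))"

end

theory Submission
  imports Defs
begin

(* Colour a vector of the open northern hemisphere by the quadrant
   of its projection to the xy-plane, i.e. by the signs of its x- and
   y-coordinates; this gives four colours.  Two hemisphere vectors in the same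
   quadrant have coordinatewise products x*x' >= 0 and y*y' >= 0, while
   z*z' > 0, so their inner product is positive and they cannot be orthogonal.
   Hence composing an embedding with the quadrant colouring yields a proper
   4-colouring of the graph. *)

definition quadrant :: "real ^ 3 \<Rightarrow> nat" where
  "quadrant v = (if v $ 1 > 0 then 1 else 0) + (if v $ 2 > 0 then 2 else 0)"

lemma quadrant_less_4: "quadrant v < 4"
  by (simp add: quadrant_def)

lemma quadrant_eq_iff:
  "quadrant a = quadrant b \<longleftrightarrow> (a $ 1 > 0 \<longleftrightarrow> b $ 1 > 0) \<and> (a $ 2 > 0 \<longleftrightarrow> b $ 2 > 0)"
  by (auto simp: quadrant_def split: if_splits)

lemma mult_nonneg_if_same_positivity:
  fixes x y :: real
  assumes "x > 0 \<longleftrightarrow> y > 0"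
  shows "0 \<le> x * y"
  using assms by (cases "x > 0") (auto intro: mult_nonpos_nonpos)

lemma inner_pos_if_same_quadrant:
  fixes a b :: "real ^ 3"
  assumes "a $ 3 > 0" "b $ 3 > 0" and "quadrant a = quadrant b"
  shows "a \<bullet> b > 0"
proof -
  have signs: "a $ 1 > 0 \<longleftrightarrow> b $ 1 > 0" "a $ 2 > 0 \<longleftrightarrow> b $ 2 > 0"
    using assms(3) by (simp_all add: quadrant_eq_iff)
  have "a \<bullet> b = a$1 * b$1 + a$2 * b$2 + a$3 * b$3"
    by (simp add: inner_vec_def sum_3)
  moreover have "0 \<le> a$1 * b$1" "0 \<le> a$2 * b$2"
    using signs by (simp_all add: mult_nonneg_if_same_positivity)
  moreover have "0 < a$3 * b$3"
    using assms(1,2) by simp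
  ultimately show ?thesis by linarith
qed

lemma quadrant_neq_if_orthogonal:
  assumes "a \<in> hemisphere" "b \<in> hemisphere" and "a \<bullet> b = 0"
  shows "quadrant a \<noteq> quadrant b"
  using assms inner_pos_if_same_quadrant by (force simp: hemisphere_def)

theorem mainTheorem1:
  fixes V :: "'a set" and E :: "'a set set"
  assumes "simple_graph V E" and "embeddable V E"
  shows "colourable 4 V E"
proof -
  obtain f where f_hemi: "f ` V \<subseteq> hemisphere"
    and f_orth: "\<And>u v. {u, v} \<in> E \<Longrightarrow> f u \<bullet> f v = 0"
    using assms(2) unfolding embeddable_def by blast
  have "quadrant (f u) \<noteq> quadrant (f v)" if edge: "{u, v} \<in> E" for u v
  proof -
    have "u \<in> V" "v \<in> V"
      using edge assms(1) unfolding simple_graph_def by auto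
    then show ?thesis
      using f_hemi f_orth[OF edge] by (intro quadrant_neq_if_orthogonal) auto
  qed
  then show ?thesis
    unfolding colourable_def
    by (intro exI[of _ "quadrant \<circ> f"]) (simp add: quadrant_less_4)
qed

end
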